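(* $\mathcal{S}=\mathcal{F}(0)\supseteq\mathcal{F}(1)\supseteq\mathcal{F}(2)\supseteq\cdots\supseteq\mathcal{F}(\bar{k})=\mathcal{F}$.
   Context: Data: $d^2\in\mathbb{Q}^{n_2}$; $A^1\in\mathbb{Q}^{m_1\times n_1}$, $G^1\in\mathbb{Q}^{m_1\times n_2}$, $b^1\in\mathbb{Q}^{m_1}$; $A^2\in\mathbb{Q}^{m_2\times n_1}$, $G^2\in\mathbb{Q}^{m_2\times n_2}$, $b^2\in\mathbb{Q}^{m_2}$; integers $0\le r_1\le n_1$, $0\le r_2\le n_2$. Let $X=\mathbb{Z}_+^{r_1}\times\mathbb{R}_+^{n_1-r_1}$, $Y=\mathbb{Z}_+^{r_2}\times\mathbb{R}_+^{n_2-r_2}$, $\mathcal{P}_1(x)=\{y\in\mathbb{R}_+^{n_2}: G^1y\ge b^1-A^1x\}$, $\mathcal{P}_2(x)=\{y\in\mathbb{R}_+^{n_2}: G^2y\ge b^2-A^2x\}$, $\mathcal{P}=\{(x,y)\in\mathbb{R}_+^{n_1}\times\mathbb{R}_+^{n_2}: y\in\mathcal{P}_1(x)\cap\mathcal{P}_2(x)\}$, $\mathcal{S}=\mathcal{P}\cap(X\times Y)$. Standing assumptions: $\mathcal{P}$ is bounded; leader variables appearing in the follower's constraints are integer; $A^2x+G^2y-b^2\in\mathbb{Z}^{m_2}$ for all $(x,y)\in\mathcal{S}$ and $d^2\in\mathbb{Z}^{n_2}$. For $x\in X$ let $\mathcal{S}(x)=Y\cap\mathcal{P}_1(x)\cap\mathcal{P}_2(x)$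 and $\mathcal{R}(x)=\{y\in\mathcal{S}(x): d^2y\le d^2\bar{y}\ \forall\bar{y}\in\mathcal{S}(x)\}$; $\mathcal{F}=\{(x,y): x\in X,\ y\in\mathcal{R}(x)\}$. For $y\in Y$ and integer $k\ge0$, $\mathcal{N}_k(y)=\{\bar{y}\in Y:\|\bar{y}-y\|_1\le k\}$, $\mathcal{R}(x;k)=\{y\in\mathcal{S}(x): d^2y\le d^2\bar{y}\ \forall\bar{y}\in\mathcal{N}_k(y)\cap\mathcal{S}(x)\}$, and $\mathcal{F}(k)=\{(x,y): x\in X,\ y\in\mathcal{R}(x;k)\}$. Finally $\bar{k}=\sum_{i=1}^{r_2}\left(\left\lfloor\max_{(x,y)\in\mathcal{P}}y_i\right\rfloor-\left\lceil\min_{(x,y)\in\mathcal{P}}y_i\right\rceil\right)+\sum_{i=r_2+1}^{n_2}\left\lceil\max_{(x,y)\in\mathcal{P}}y_i-\min_{(x,y)\in\mathcal{P}}y_i\right\rceil$. *)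

theory Defs
  imports Complex_Main
begin

text \<open>Vectors in R^n are functions nat => real, indices 0..n-1, zero outside.
  Matrices are functions row => column => rat. Indices are 0-based: the first r
  components (indices < r) are the integer ones.\<close>

record bilevel =
  n1 :: nat
  n2 :: nat
  m1 :: nat
  m2 :: nat
  r1 :: nat
  r2 :: nat
  d2 :: "nat \<Rightarrow> rat"
  A1 :: "nat \<Rightarrow> nat \<Rightarrow> rat"
  G1 :: "nat \<Rightarrow> nat \<Rightarrow> rat"
  b1 :: "nat \<Rightarrow> rat"
  A2 :: "nat \<Rightarrow> nat \<Rightarrow> rat"
  G2 :: "nat \<Rightarrow> nat \<Rightarrow> rat"
  b2 :: "nat \<Rightarrow> rat"

definition matvec :: "(nat \<Rightarrow> nat \<Rightarrow> rat) \<Rightarrow> nat \<Rightarrow> (nat \<Rightarrow> real) \<Rightarrow> nat \<Rightarrow> real" where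
  "matvec A n x j = (\<Sum>i<n. real_of_rat (A j i) * x i)"

definition dotp :: "(nat \<Rightarrow> rat) \<Rightarrow> nat \<Rightarrow> (nat \<Rightarrow> real) \<Rightarrow> real" where
  "dotp d n y = (\<Sum>i<n. real_of_rat (d i) * y i)"

definition l1dist :: "nat \<Rightarrow> (nat \<Rightarrow> real) \<Rightarrow> (nat \<Rightarrow> real) \<Rightarrow> real" where
  "l1dist n u v = (\<Sum>i<n. \<bar>u i - v i\<bar>)"

definition nonneg :: "nat \<Rightarrow> (nat \<Rightarrow> real) set" where
  "nonneg n = {v. (\<forall>i<n. 0 \<le> v i) \<and> (\<forall>i\<ge>n. v i = 0)}"

definition mixset :: "nat \<Rightarrow> nat \<Rightarrow> (nat \<Rightarrow> real) set" where
  "mixset r n = {v. v \<in> nonneg n \<and> (\<forall>i<r. v i \<in> \<int>)}"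

definition XX :: "bilevel \<Rightarrow> (nat \<Rightarrow> real) set" where
  "XX I = mixset (r1 I) (n1 I)"

definition YY :: "bilevel \<Rightarrow> (nat \<Rightarrow> real) set" where
  "YY I = mixset (r2 I) (n2 I)"

definition P1 :: "bilevel \<Rightarrow> (nat \<Rightarrow> real) \<Rightarrow> (nat \<Rightarrow> real) set" where
  "P1 I x = {y \<in> nonneg (n2 I). \<forall>j<m1 I.
      matvec (G1 I) (n2 I) y j \<ge> real_of_rat (b1 I j) - matvec (A1 I) (n1 I) x j}"

definition P2 :: "bilevel \<Rightarrow> (nat \<Rightarrow> real) \<Rightarrow> (nat \<Rightarrow> real) set" where
  "P2 I x = {y \<in> nonneg (n2 I). \<forall>j<m2 I.
      matvec (G2 I) (n2 I) y j \<ge> real_of_rat (b2 I j) - matvec (A2 I) (n1 I) x j}"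

definition PP :: "bilevel \<Rightarrow> ((nat \<Rightarrow> real) \<times> (nat \<Rightarrow> real)) set" where
  "PP I = {(x, y). x \<in> nonneg (n1 I) \<and> y \<in> nonneg (n2 I) \<and> y \<in> P1 I x \<inter> P2 I x}"

definition SS :: "bilevel \<Rightarrow> ((nat \<Rightarrow> real) \<times> (nat \<Rightarrow> real)) set" where
  "SS I = PP I \<inter> (XX I \<times> YY I)"

definition Sx :: "bilevel \<Rightarrow> (nat \<Rightarrow> real) \<Rightarrow> (nat \<Rightarrow> real) set" where
  "Sx I x = YY I \<inter> P1 I x \<inter> P2 I x"

definition Rx :: "bilevel \<Rightarrow> (nat \<Rightarrow> real) \<Rightarrow> (nat \<Rightarrow> real) set" where
  "Rx I x = {y \<in> Sx I x. \<forall>yb \<in> Sx I x. dotp (d2 I) (n2 I) y \<le> dotp (d2 I) (n2 I) yb}"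

definition FF :: "bilevel \<Rightarrow> ((nat \<Rightarrow> real) \<times> (nat \<Rightarrow> real)) set" where
  "FF I = {(x, y). x \<in> XX I \<and> y \<in> Rx I x}"

definition Nk :: "bilevel \<Rightarrow> int \<Rightarrow> (nat \<Rightarrow> real) \<Rightarrow> (nat \<Rightarrow> real) set" where
  "Nk I k y = {yb \<in> YY I. l1dist (n2 I) yb y \<le> real_of_int k}"

definition Rxk :: "bilevel \<Rightarrow> (nat \<Rightarrow> real) \<Rightarrow> int \<Rightarrow> (nat \<Rightarrow> real) set" where
  "Rxk I x k = {y \<in> Sx I x. \<forall>yb \<in> Nk I k y \<inter> Sx I x.
      dotp (d2 I) (n2 I) y \<le> dotp (d2 I) (n2 I) yb}"

definition Fk :: "bilevel \<Rightarrow> int \<Rightarrow> ((nat \<Rightarrow> real) \<times> (nat \<Rightarrow> real)) set" where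
  "Fk I k = {(x, y). x \<in> XX I \<and> y \<in> Rxk I x k}"

definition maxP :: "bilevel \<Rightarrow> nat \<Rightarrow> real" where
  "maxP I i = Sup ((\<lambda>p. snd p i) ` PP I)"

definition minP :: "bilevel \<Rightarrow> nat \<Rightarrow> real" where
  "minP I i = Inf ((\<lambda>p. snd p i) ` PP I)"

definition kbar :: "bilevel \<Rightarrow> int" where
  "kbar I = (\<Sum>i<r2 I. \<lfloor>maxP I i\<rfloor> - \<lceil>minP I i\<rceil>)
          + (\<Sum>i\<in>{r2 I..<n2 I}. \<lceil>maxP I i - minP I i\<rceil>)"

definition P_bounded :: "bilevel \<Rightarrow> bool" where
  "P_bounded I \<longleftrightarrow> (\<exists>B. \<forall>(x, y) \<in> PP I. (\<forall>i. \<bar>x i\<bar> \<le> B) \<and> (\<forall>i. \<bar>y i\<bar> \<le> B))"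

end

theory Submission
  imports Defs
begin

text \<open>The 0-neighbourhood of \<open>y\<close> only contains points agreeing with \<open>y\<close> on the \<open>n2\<close>
  follower coordinates, which is all the objective sees, so \<open>\<F>(0) = \<S>\<close>. The neighbourhoods
  \<open>\<N>\<^sub>k(y)\<close> grow with \<open>k\<close>, so the sets \<open>\<F>(k)\<close> shrink. Finally, every coordinate of a point
  of the bounded polyhedron \<open>\<P>\<close> lies between its minimum and maximum over \<open>\<P>\<close>, and an integer
  coordinate even between the ceiling of the one and the floor of the other; summing over the
  coordinates, \<open>kbar\<close> bounds the \<open>\<ell>\<^sub>1\<close>-diameter of every follower set \<open>\<S>(x)\<close>. Hence the
  \<open>kbar\<close>-neighbourhood of \<open>y\<close> contains \<open>\<S>(x)\<close>, and optimality over it is global optimality.\<close>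

lemma dotp_cong: "(\<And>i. i < n \<Longrightarrow> u i = v i) \<Longrightarrow> dotp d n u = dotp d n v"
  unfolding dotp_def by (rule sum.cong) auto

lemma l1dist_le_0_imp_eq:
  assumes "l1dist n u v \<le> 0" "i < n"
  shows "u i = v i"
proof -
  have "\<bar>u i - v i\<bar> \<le> (\<Sum>j<n. \<bar>u j - v j\<bar>)"
    by (rule member_le_sum) (use assms(2) in auto)
  with assms(1) show ?thesis unfolding l1dist_def by linarith
qed

lemma Nk_mono: "k \<le> k' \<Longrightarrow> Nk I k y \<subseteq> Nk I k' y"
  unfolding Nk_def by auto

lemma Rxk_antimono: "k \<le> k' \<Longrightarrow> Rxk I x k' \<subseteq> Rxk I x k"
  using Nk_mono[of k k' I] unfolding Rxk_def by blast

lemma Fk_antimono: "k \<le> k' \<Longrightarrow> Fk I k' \<subseteq> Fk I k"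
  using Rxk_antimono[of k k' I] unfolding Fk_def by blast

lemma Rxk_0: "Rxk I x 0 = Sx I x"
proof -
  have "dotp (d2 I) (n2 I) y \<le> dotp (d2 I) (n2 I) yb" if "yb \<in> Nk I 0 y" for y yb
  proof -
    have "l1dist (n2 I) yb y \<le> 0" using that unfolding Nk_def by simp
    then have "dotp (d2 I) (n2 I) yb = dotp (d2 I) (n2 I) y"
      by (intro dotp_cong) (rule l1dist_le_0_imp_eq)
    then show ?thesis by simp
  qed
  then show ?thesis unfolding Rxk_def by blast
qed

lemma XX_subset_nonneg: "XX I \<subseteq> nonneg (n1 I)"
  unfolding XX_def mixset_def by blast

lemma P1_subset_nonneg: "P1 I x \<subseteq> nonneg (n2 I)"
  unfolding P1_def by blast

lemma SS_eq: "SS I = {(x, y). x \<in> XX I \<and> y \<in> Sx I x}"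
  using XX_subset_nonneg[of I] P1_subset_nonneg[of I]
  unfolding SS_def PP_def Sx_def by blast

lemma SS_eq_Fk_0: "SS I = Fk I 0"
  unfolding SS_eq Fk_def Rxk_0 ..

lemma PP_of_Sx: "x \<in> XX I \<Longrightarrow> y \<in> Sx I x \<Longrightarrow> (x, y) \<in> PP I"
  using SS_eq[of I] unfolding SS_def by blast

lemma PP_coord_bounds:
  assumes "P_bounded I" "(x, y) \<in> PP I"
  shows "minP I i \<le> y i" "y i \<le> maxP I i"
proof -
  obtain B where B: "\<forall>(x, y) \<in> PP I. (\<forall>i. \<bar>x i\<bar> \<le> B) \<and> (\<forall>i. \<bar>y i\<bar> \<le> B)"
    using assms(1) unfolding P_bounded_def by blast
  let ?C = "(\<lambda>p. snd p i) ` PP I"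
  have "-B \<le> t \<and> t \<le> B" if "t \<in> ?C" for t
  proof -
    obtain q where "q \<in> PP I" "t = snd q i" using \<open>t \<in> ?C\<close> by blast
    then have "\<bar>t\<bar> \<le> B" using B by (cases q) auto
    then show ?thesis by linarith
  qed
  then have "bdd_above ?C" "bdd_below ?C"
    by (auto intro!: bdd_aboveI bdd_belowI)
  moreover have "y i \<in> ?C" using assms(2) by force
  ultimately show "minP I i \<le> y i" "y i \<le> maxP I i"
    unfolding minP_def maxP_def by (simp_all add: cInf_lower cSup_upper)
qed

lemma Ints_le_floor: "(a::real) \<in> \<int> \<Longrightarrow> a \<le> b \<Longrightarrow> a \<le> of_int \<lfloor>b\<rfloor>"
  by (metis Ints_cases floor_mono floor_of_int of_int_le_iff)

lemma ceiling_le_Ints: "(a::real) \<in> \<int> \<Longrightarrow> b \<le> a \<Longrightarrow> of_int \<lceil>b\<rceil> \<le> a"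
  by (metis Ints_cases ceiling_mono ceiling_of_int of_int_le_iff)

lemma abs_diff_le_Ints_between:
  fixes a b lo hi :: real
  assumes "a \<in> \<int>" "b \<in> \<int>" "lo \<le> a" "a \<le> hi" "lo \<le> b" "b \<le> hi"
  shows "\<bar>a - b\<bar> \<le> of_int (\<lfloor>hi\<rfloor> - \<lceil>lo\<rceil>)"
  using Ints_le_floor[of a hi] Ints_le_floor[of b hi]
    ceiling_le_Ints[of a lo] ceiling_le_Ints[of b lo] assms
  by linarith

lemma abs_diff_le_between:
  fixes a b lo hi :: real
  assumes "lo \<le> a" "a \<le> hi" "lo \<le> b" "b \<le> hi"
  shows "\<bar>a - b\<bar> \<le> of_int \<lceil>hi - lo\<rceil>"
  using assms le_of_int_ceiling[of "hi - lo"] by linarith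

lemma l1dist_le_kbar:
  assumes "P_bounded I" "r2 I \<le> n2 I"
    and "(x, y) \<in> PP I" "(x', y') \<in> PP I" "y \<in> YY I" "y' \<in> YY I"
  shows "l1dist (n2 I) y' y \<le> of_int (kbar I)"
proof -
  let ?r = "r2 I" and ?n = "n2 I"
  note y_bounds = PP_coord_bounds[OF assms(1,3)] and y'_bounds = PP_coord_bounds[OF assms(1,4)]
  have split: "{..<?n} = {..<?r} \<union> {?r..<?n}" using assms(2) by auto
  have "l1dist ?n y' y = (\<Sum>i<?r. \<bar>y' i - y i\<bar>) + (\<Sum>i\<in>{?r..<?n}. \<bar>y' i - y i\<bar>)"
    unfolding l1dist_def split by (subst sum.union_disjoint) auto
  also have "\<dots> \<le> (\<Sum>i<?r. of_int (\<lfloor>maxP I i\<rfloor> - \<lceil>minP I i\<rceil>))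
      + (\<Sum>i\<in>{?r..<?n}. of_int \<lceil>maxP I i - minP I i\<rceil>)"
  proof (intro add_mono sum_mono)
    fix i assume "i \<in> {..<?r}"
    then have "y i \<in> \<int>" "y' i \<in> \<int>"
      using assms(5,6) unfolding YY_def mixset_def by auto
    then show "\<bar>y' i - y i\<bar> \<le> of_int (\<lfloor>maxP I i\<rfloor> - \<lceil>minP I i\<rceil>)"
      using y_bounds y'_bounds by (intro abs_diff_le_Ints_between)
  next
    fix i
    show "\<bar>y' i - y i\<bar> \<le> of_int \<lceil>maxP I i - minP I i\<rceil>"
      using y_bounds y'_bounds by (intro abs_diff_le_between)
  qed
  also have "\<dots> = of_int (kbar I)"
    unfolding kbar_def by simp
  finally show ?thesis .
qed

lemma Sx_subset_Nk_kbar: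
  assumes "P_bounded I" "r2 I \<le> n2 I" "x \<in> XX I" "y \<in> Sx I x"
  shows "Sx I x \<subseteq> Nk I (kbar I) y"
proof
  fix y' assume "y' \<in> Sx I x"
  moreover have "y \<in> YY I" "y' \<in> YY I" using assms(4) \<open>y' \<in> Sx I x\<close> unfolding Sx_def by auto
  ultimately show "y' \<in> Nk I (kbar I) y"
    using l1dist_le_kbar[OF assms(1,2) PP_of_Sx[OF assms(3,4)] PP_of_Sx[OF assms(3)]]
    unfolding Nk_def by blast
qed

lemma Rxk_kbar:
  assumes "P_bounded I" "r2 I \<le> n2 I" "x \<in> XX I"
  shows "Rxk I x (kbar I) = Rx I x"
  using Sx_subset_Nk_kbar[OF assms] unfolding Rxk_def Rx_def by blast

lemma Fk_kbar_eq_FF: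
  assumes "P_bounded I" "r2 I \<le> n2 I"
  shows "Fk I (kbar I) = FF I"
  using Rxk_kbar[OF assms] unfolding Fk_def FF_def by blast

theorem theorem1:
  fixes I :: bilevel
  assumes "r1 I \<le> n1 I" and "r2 I \<le> n2 I"
    and "P_bounded I"
    and "\<forall>j<m2 I. \<forall>i<n1 I. A2 I j i \<noteq> 0 \<longrightarrow> i < r1 I"
    and "\<forall>(x, y) \<in> SS I. \<forall>j<m2 I.
           matvec (A2 I) (n1 I) x j + matvec (G2 I) (n2 I) y j - real_of_rat (b2 I j) \<in> \<int>"
    and "\<forall>i<n2 I. d2 I i \<in> \<int>"
  shows "SS I = Fk I 0
       \<and> (\<forall>k::int. 0 \<le> k \<and> k < kbar I \<longrightarrow> Fk I (k + 1) \<subseteq> Fk I k)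
       \<and> Fk I (kbar I) = FF I"
  using SS_eq_Fk_0[of I] Fk_antimono[of _ "_ + 1" I] Fk_kbar_eq_FF[OF assms(3,2)]
  by simp

end
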